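(* Let $\mathbf v\in\mathbb{R}^\infty$, and let $\mathbf y=\mathbb{F}^{\rm S}\mathbf v$ and $\mathbf z=\mathbb{L}^{\rm S}\mathbf v$, where $\mathbb{F}^{\rm S}=(1,x(1+x))$ and $\mathbb{L}^{\rm S}=(1+2x,x(1+x))$. Let $D=(1,-x)=\mathrm{diag}(1,-1,1,\ldots)$ and $C(x)=\frac{1-\sqrt{1-4x}}{2x}$. Then: (a) $\left(\frac{1}{1+2xC(x)},xC(x)\right)\mathbf z=D(\mathbb{F}^{\rm S})^{-1}D\,\mathbf y$; (b) $\left(\frac{1}{1-4x^2C(x)^2},xC(x)\right)\mathbf z=D(\mathbb{L}^{\rm S})^{-1}D\,\mathbf y$; (c) $\left(1+2xC(x),xC(x)\right)\mathbf y=D(\mathbb{F}^{\rm S})^{-1}D\,\mathbf z$; (d) $\left(\frac{1+2xC(x)}{1-2xC(x)},xC(x)\right)\mathbf y=D(\mathbb{L}^{\rm S})^{-1}D\,\mathbf z$.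
   Context: $\mathbb{R}^\infty$ is the space of real column vectors $[v_0,v_1,\ldots]^T$, identified with generating functions. For formal power series $g(x)$ with $g(0)\neq 0$ and $f(x)$ with $f(0)=0$, $f'(0)\ne0$, $(g(x),f(x))$ denotes the (Riordan) infinite lower triangular matrix whose $j$-th column has generating function $g(x)f(x)^j$; it maps a vector with generating function $U(x)$ to one with generating function $g(x)U(f(x))$. These matrices form a group with $(g,f)(h,l)=(g\cdot h(f),l(f))$ and $(g,f)^{-1}=(1/g(\bar f),\bar f)$, $\bar f$ the compositional inverse of $f$. *)

theory Defs
  imports Complex_Main "HOL-Computational_Algebra.Formal_Power_Series"
begin

text \<open>Vectors in R^infinity are identified with their generating functions (real fps).
  The Riordan array (g,f) maps U(x) to g(x) U(f(x)).\<close>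
definition riordan :: "real fps \<Rightarrow> real fps \<Rightarrow> real fps \<Rightarrow> real fps" where
  "riordan g f U = g * (U oo f)"

definition riordan_inv :: "real fps \<Rightarrow> real fps \<Rightarrow> real fps \<Rightarrow> real fps" where
  "riordan_inv g f = riordan (inverse (g oo fps_inv f)) (fps_inv f)"

definition sqrt_1m4x :: "real fps" where
  "sqrt_1m4x = fps_radical (\<lambda>k a. root k a) 2 (1 - 4 * fps_X)"

definition catalanC :: "real fps" where
  "catalanC = (1 - sqrt_1m4x) / (2 * fps_X)"

definition Dmat :: "real fps \<Rightarrow> real fps" where
  "Dmat = riordan 1 (- fps_X)"

end

theory Submission
  imports Defs
begin

text \<open>Put \<open>G = x C(x)\<close>. Since \<open>2G = 1 - \<surd>(1-4x)\<close>, \<open>G\<close> solves \<open>G - G\<^sup>2 = x\<close>, so the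
  compositional inverse of \<open>x(1+x)\<close> is \<open>-G(-x)\<close>. Conjugating by \<open>D\<close> replaces \<open>f(x)\<close> by
  \<open>-f(-x)\<close> and \<open>g(x)\<close> by \<open>g(-x)\<close>, whence \<open>D (g, x(1+x))\<^sup>-\<^sup>1 D = (1/g(-G), G)\<close>.
  Finally \<open>z = (1+2x) y\<close>, and the four identities reduce to identities between
  the first components, all rational in \<open>G\<close>.\<close>

lemma sqrt_1m4x_nth_0: "fps_nth sqrt_1m4x 0 = 1"
  unfolding sqrt_1m4x_def by simp

lemma sqrt_1m4x_square: "sqrt_1m4x ^ 2 = 1 - 4 * fps_X"
  using power_radical[of "1 - 4 * fps_X :: real fps" "\<lambda>k a. root k a" 1]
  by (simp add: sqrt_1m4x_def numeral_2_eq_2)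

lemma two_X_catalanC: "2 * (fps_X * catalanC) = 1 - sqrt_1m4x"
proof (cases "1 - sqrt_1m4x = 0")
  case True
  then show ?thesis unfolding catalanC_def by simp
next
  case False
  have "subdegree (1 - sqrt_1m4x) \<ge> 1"
    using False sqrt_1m4x_nth_0 by (intro subdegree_geI) auto
  then have "(1 - sqrt_1m4x) / (2 * fps_X) * (2 * fps_X) = 1 - sqrt_1m4x"
    by (intro fps_times_divide_eq) (auto simp: subdegree_mult)
  then show ?thesis unfolding catalanC_def by (simp add: algebra_simps)
qed

lemma X_catalanC_quadratic: "fps_X * catalanC - (fps_X * catalanC) ^ 2 = fps_X"
proof -
  let ?G = "fps_X * catalanC"
  have "(1 - 2 * ?G) ^ 2 = 1 - 4 * fps_X"
    using two_X_catalanC sqrt_1m4x_square by simp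
  then have "4 * (?G - ?G ^ 2) = 4 * fps_X"
    by (simp add: power2_eq_square algebra_simps)
  moreover have "(4 :: real fps) \<noteq> 0"
    by (metis fps_numeral_nth_0 fps_zero_nth zero_neq_numeral)
  ultimately show ?thesis
    using mult_left_cancel by blast
qed

lemma fps_inv_unique:
  fixes a b :: "'a :: field fps"
  assumes "fps_nth a 0 = 0" "fps_nth a 1 \<noteq> 0" "fps_nth b 0 = 0" "a oo b = fps_X"
  shows "fps_inv a = b"
proof -
  have "fps_inv a = fps_inv a oo (a oo b)"
    using assms(4) by simp
  also have "\<dots> = (fps_inv a oo a) oo b"
    using assms(1,3) by (simp add: fps_compose_assoc)
  also have "\<dots> = b"
    using assms by (simp add: fps_inv)
  finally show ?thesis .
qed

lemma fps_compose_uminus_X_uminus_X: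
  fixes f :: "'a :: idom fps"
  shows "f oo - fps_X oo - fps_X = f"
  by (simp add: fps_compose_assoc[symmetric] fps_compose_uminus)

lemma fps_inv_X_times_1_plus_X:
  fixes G :: "'a :: field fps"
  assumes G0: "fps_nth G 0 = 0" and G_quadratic: "G - G ^ 2 = fps_X"
  shows "fps_inv (fps_X * (1 + fps_X)) = - (G oo - fps_X)"
proof (rule fps_inv_unique)
  let ?h = "- (G oo - fps_X)"
  have "fps_X * (1 + fps_X) oo ?h = ?h * (1 + ?h)"
    using G0 by (simp add: fps_compose_mult_distrib fps_compose_add_distrib)
  also have "\<dots> = - ((G - G ^ 2) oo - fps_X)"
    by (simp add: fps_compose_sub_distrib fps_compose_mult_distrib power2_eq_square
        algebra_simps)
  finally show "fps_X * (1 + fps_X) oo ?h = fps_X"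
    by (simp add: G_quadratic fps_compose_uminus)
qed (use G0 in \<open>simp_all add: fps_mult_nth\<close>)

lemma Dmat_riordan_Dmat:
  assumes "fps_nth f 0 = 0"
  shows "Dmat (riordan g f (Dmat u)) = riordan (g oo - fps_X) (- (f oo - fps_X)) u"
proof -
  have "u oo - fps_X oo f oo - fps_X = u oo - (f oo - fps_X)"
    using assms by (simp add: fps_compose_assoc[symmetric] fps_compose_uminus)
  then show ?thesis
    unfolding Dmat_def riordan_def by (simp add: fps_compose_mult_distrib)
qed

lemma Dmat_riordan_inv_Dmat:
  assumes G0: "fps_nth G 0 = 0" and G_quadratic: "G - G ^ 2 = fps_X" and g0: "fps_nth g 0 \<noteq> 0"
  shows "Dmat (riordan_inv g (fps_X * (1 + fps_X)) (Dmat u)) = riordan (inverse (g oo - G)) G u"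
proof -
  let ?h = "- (G oo - fps_X)"
  have h_uminus_X: "?h oo - fps_X = - G"
    by (simp add: fps_compose_uminus fps_compose_uminus_X_uminus_X)
  have "inverse (g oo ?h) oo - fps_X = inverse (g oo ?h oo - fps_X)"
    using g0 G0 by (intro fps_inverse_compose) auto
  also have "\<dots> = inverse (g oo - G)"
    using G0 by (simp add: fps_compose_assoc[symmetric] h_uminus_X)
  finally show ?thesis
    unfolding riordan_inv_def fps_inv_X_times_1_plus_X[OF G0 G_quadratic]
    using G0 by (simp add: Dmat_riordan_Dmat h_uminus_X)
qed

lemma inverse_one_minus_square_mult:
  fixes a :: "'a :: field fps"
  assumes "fps_nth a 0 = 0"
  shows "inverse (1 - a * a) * (1 + a) = inverse (1 - a)"
proof -
  have "1 - a * a = (1 - a) * (1 + a)"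
    by (simp add: algebra_simps)
  then show ?thesis
    using assms by (simp add: fps_inverse_mult inverse_mult_eq_1 mult.assoc)
qed

theorem theorem4p5:
  fixes v y z :: "real fps"
  assumes "y = riordan 1 (fps_X * (1 + fps_X)) v"
      and "z = riordan (1 + 2 * fps_X) (fps_X * (1 + fps_X)) v"
  shows "(riordan (inverse (1 + 2 * fps_X * catalanC)) (fps_X * catalanC) z
           = Dmat (riordan_inv 1 (fps_X * (1 + fps_X)) (Dmat y))) \<and>
     (riordan (inverse (1 - 4 * fps_X\<^sup>2 * catalanC\<^sup>2)) (fps_X * catalanC) z
           = Dmat (riordan_inv (1 + 2 * fps_X) (fps_X * (1 + fps_X)) (Dmat y))) \<and>
     (riordan (1 + 2 * fps_X * catalanC) (fps_X * catalanC) y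
           = Dmat (riordan_inv 1 (fps_X * (1 + fps_X)) (Dmat z))) \<and>
     (riordan ((1 + 2 * fps_X * catalanC) / (1 - 2 * fps_X * catalanC)) (fps_X * catalanC) y
           = Dmat (riordan_inv (1 + 2 * fps_X) (fps_X * (1 + fps_X)) (Dmat z)))"
proof -
  define G where "G = fps_X * catalanC"
  have G0: "fps_nth G 0 = 0"
    unfolding G_def by simp
  have z_G: "\<And>g. riordan g G z = riordan (g * (1 + 2 * G)) G y"
    using assms G0 unfolding riordan_def
    by (simp add: fps_compose_add_distrib fps_compose_mult_distrib ac_simps)
  have compose_minus_G: "(1 + 2 * fps_X) oo - G = 1 - 2 * G"
    using G0 by (simp add: fps_compose_add_distrib fps_compose_mult_distrib)
  have catalan_terms:
    "2 * fps_X * catalanC = 2 * G" "4 * fps_X\<^sup>2 * catalanC\<^sup>2 = 2 * G * (2 * G)"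
    unfolding G_def by (simp_all add: power2_eq_square ac_simps)
  have unit_plus: "inverse (1 + 2 * G) * (1 + 2 * G) = 1"
    using G0 by (simp add: inverse_mult_eq_1)
  have square: "inverse (1 - 2 * G * (2 * G)) * (1 + 2 * G) = inverse (1 - 2 * G)"
    using G0 by (intro inverse_one_minus_square_mult) simp
  show ?thesis
    unfolding catalan_terms G_def[symmetric] z_G square
    using G0 compose_minus_G unit_plus
    by (simp add: z_G Dmat_riordan_inv_Dmat X_catalanC_quadratic[folded G_def]
        fps_divide_unit mult.commute)
qed

end
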